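(* Let $v=(v_l,v_h)$ be a valuation profile and let $\alpha\in(0,1)$. Then for each $t\in\{0,1,\dots,ES(v)\}$ there is a strict Nash equilibrium of the $\alpha$-auction game with valuations $v$ whose payoff vector is $(\pi_l,\pi_h)=(c_l+t,\ c_h+(ES(v)-t))$. That is, the set of strict Nash equilibrium payoffs of each interior-price auction contains the set $\{(c_l+t,\,c_h+(ES(v)-t)) : t=0,\dots,ES(v)\}$, which is the set of Nash equilibrium payoffs of the extreme-price auctions ($\alpha\in\{0,1\}$).
   Context: Two agents $l,h$ jointly own an indivisible good. Agent $i\in\{l,h\}$ has valuation $v_i$; valuations are even nonnegative integers bounded by a maximum valuation $\overline{v}$, with $v_l<v_h$. Agent $i$'s utility from receiving the object and paying $p$ to the other agent is $v_i-p$; from not receiving the object and receiving transfer $p$ it is $p$; agents are expected-utility maximizers. Net valuations are $c_i\equiv v_i/2$, and the equity surplus is $ES(v)\equiv c_h-c_l$. The bid set is $\mathcal{B}=\{0,1,\dots,\overline{p}\}$ with $\overline{p}$ an integer, $\overline{p}\geq\overline{v}/2$. For $\alpha\in[0,1]$, the $\alpha$-auction (with tie-breaker favoring $h$) is: each agent simultaneously chooses a bid in $\mathcal{B}$; the agent with the strictly higher bid receives the object, and in case of a tie agent $h$ receives the object; the agent receiving the object pays $\alpha\cdot(\text{winner's bid})+(1-\alpha)\cdot(\text{loser's bid})$ to the other agent. Auctions with $\alpha\in\{0,1\}$ are extreme-price auctions; those with $\alpha\in(0,1)$ are interior-price auctions. A strict Nash equilibrium is a strategy profile in which each agent's strategy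 is her unique best response to the other agent's strategy (necessarily a pure-strategy profile). *)

theory Defs
  imports Complex_Main
begin

text \<open>Agent h wins iff bh \<ge> bl
  (tie-breaker favours h).\<close>

definition bid_set :: "int \<Rightarrow> int set" where
  "bid_set pbar = {0..pbar}"

definition price :: "real \<Rightarrow> int \<Rightarrow> int \<Rightarrow> real" where
  "price \<alpha> bl bh = \<alpha> * of_int (max bl bh) + (1 - \<alpha>) * of_int (min bl bh)"

definition util_l :: "real \<Rightarrow> int \<Rightarrow> int \<Rightarrow> int \<Rightarrow> real" where
  "util_l \<alpha> vl bl bh = (if bh \<ge> bl then price \<alpha> bl bh else of_int vl - price \<alpha> bl bh)"

definition util_h :: "real \<Rightarrow> int \<Rightarrow> int \<Rightarrow> int \<Rightarrow> real" where
  "util_h \<alpha> vh bl bh = (if bh \<ge> bl then of_int vh - price \<alpha> bl bh else price \<alpha> bl bh)"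

definition strict_NE :: "int \<Rightarrow> real \<Rightarrow> int \<Rightarrow> int \<Rightarrow> int \<Rightarrow> int \<Rightarrow> bool" where
  "strict_NE pbar \<alpha> vl vh bl bh \<longleftrightarrow>
     bl \<in> bid_set pbar \<and> bh \<in> bid_set pbar \<and>
     (\<forall>b \<in> bid_set pbar. b \<noteq> bl \<longrightarrow> util_l \<alpha> vl b bh < util_l \<alpha> vl bl bh) \<and>
     (\<forall>b \<in> bid_set pbar. b \<noteq> bh \<longrightarrow> util_h \<alpha> vh bl b < util_h \<alpha> vh bl bh)"

definition net_val :: "int \<Rightarrow> real" where
  "net_val v = of_int v / 2"

definition ES :: "int \<Rightarrow> int \<Rightarrow> real" where
  "ES vl vh = net_val vh - net_val vl"

end

theory Submission
  imports Defs
begin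

text \<open>Both agents bid the same p with c_l \<le> p \<le> c_h, giving payoffs (p, v_h - p), i.e.
  t = p - c_l. For interior \<alpha> the price lies strictly between two distinct bids, so a deviator
  who underbids trades at a price strictly below p and one who overbids strictly above p. Either
  way the deviator ends up strictly worse off, using v_l - p \<le> p and p \<le> v_h - p.\<close>

lemma price_equal_bids: "price \<alpha> p p = of_int p"
  by (simp add: price_def algebra_simps)

lemma price_below_higher_bid:
  assumes "b < p" "0 < \<alpha>" "\<alpha> < 1"
  shows "price \<alpha> b p < of_int p" "price \<alpha> p b < of_int p"
proof -
  have "(1 - \<alpha>) * (of_int p - of_int b) > 0" using assms by simp
  then show "price \<alpha> b p < of_int p" "price \<alpha> p b < of_int p"
    using assms by (auto simp: price_def max_def min_def algebra_simps)
qed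

lemma price_above_lower_bid:
  assumes "p < b" "0 < \<alpha>" "\<alpha> < 1"
  shows "price \<alpha> b p > of_int p" "price \<alpha> p b > of_int p"
proof -
  have "\<alpha> * (of_int b - of_int p) > 0" using assms by simp
  then show "price \<alpha> b p > of_int p" "price \<alpha> p b > of_int p"
    using assms by (auto simp: price_def max_def min_def algebra_simps)
qed

lemma util_l_equal_bids: "util_l \<alpha> vl p p = of_int p"
  by (simp add: util_l_def price_equal_bids)

lemma util_h_equal_bids: "util_h \<alpha> vh p p = of_int vh - of_int p"
  by (simp add: util_h_def price_equal_bids)

lemma util_l_deviation_from_equal_bids:
  assumes "b \<noteq> p" "vl \<le> 2 * p" "0 < \<alpha>" "\<alpha> < 1"
  shows "util_l \<alpha> vl b p < util_l \<alpha> vl p p"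
proof (cases "b < p")
  case True
  then show ?thesis
    using price_below_higher_bid(1)[OF True assms(3,4)] by (simp add: util_l_def price_equal_bids)
next
  case False
  with assms(1) have "p < b" by simp
  then show ?thesis
    using price_above_lower_bid(1)[OF \<open>p < b\<close> assms(3,4)] assms(2)
    by (simp add: util_l_def price_equal_bids)
qed

lemma util_h_deviation_from_equal_bids:
  assumes "b \<noteq> p" "2 * p \<le> vh" "0 < \<alpha>" "\<alpha> < 1"
  shows "util_h \<alpha> vh p b < util_h \<alpha> vh p p"
proof (cases "b < p")
  case True
  then show ?thesis
    using price_below_higher_bid(2)[OF True assms(3,4)] assms(2)
    by (simp add: util_h_def price_equal_bids)
next
  case False
  with assms(1) have "p < b" by simp
  then show ?thesis
    using price_above_lower_bid(2)[OF \<open>p < b\<close> assms(3,4)] by (simp add: util_h_def price_equal_bids)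
qed

lemma strict_NE_equal_bids:
  assumes "0 \<le> p" "p \<le> pbar" "vl \<le> 2 * p" "2 * p \<le> vh" "0 < \<alpha>" "\<alpha> < 1"
  shows "strict_NE pbar \<alpha> vl vh p p"
  using assms util_l_deviation_from_equal_bids util_h_deviation_from_equal_bids
  by (simp add: strict_NE_def bid_set_def)

theorem proposition2:
  fixes vl vh vbar pbar :: int and \<alpha> :: real and t :: int
  assumes "even vl" and "even vh" and "0 \<le> vl" and "vl < vh" and "vh \<le> vbar"
    and "of_int pbar \<ge> of_int vbar / (2::real)"
    and "0 < \<alpha>" and "\<alpha> < 1"
    and "0 \<le> t" and "of_int t \<le> ES vl vh"
  shows "\<exists>bl bh. strict_NE pbar \<alpha> vl vh bl bh \<and>
           util_l \<alpha> vl bl bh = net_val vl + of_int t \<and>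
           util_h \<alpha> vh bl bh = net_val vh + (ES vl vh - of_int t)"
proof -
  define p where "p = vl div 2 + t"
  have p_real: "real_of_int p = real_of_int vl / 2 + of_int t"
    using \<open>even vl\<close> by (auto simp: p_def elim!: evenE)
  have "2 * p \<le> vh"
    using \<open>of_int t \<le> ES vl vh\<close> p_real by (simp add: ES_def net_val_def)
  moreover have "p \<le> pbar"
    using \<open>2 * p \<le> vh\<close> \<open>vh \<le> vbar\<close> \<open>of_int pbar \<ge> of_int vbar / 2\<close> by linarith
  moreover have "0 \<le> p" "vl \<le> 2 * p"
    using \<open>0 \<le> vl\<close> \<open>0 \<le> t\<close> p_real by (simp_all add: p_def)
  ultimately have "strict_NE pbar \<alpha> vl vh p p"
    using strict_NE_equal_bids \<open>0 < \<alpha>\<close> \<open>\<alpha> < 1\<close> by blast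
  with p_real show ?thesis
    by (intro exI[of _ p]) (simp add: util_l_equal_bids util_h_equal_bids ES_def net_val_def)
qed

end
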